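(* Fix $p\geq 3$ and put $\lambda=\lambda_p=2\cos(\pi/p)$. Let $[r_0;r_1,r_2,\dots]$ be an admissible $\lambda$-continued fraction. Then (i) if $m\geq 1$ and $r_m=r_{m+1}=\cdots=r_{m+j-1}=1$, then $j\leq p-3$; and (ii) if $r_0=r_1=\cdots=r_{j-1}=1$, then $j\leq p-2$.
   Context: Every finite real $\alpha$ is expanded by the "next integral multiple of $\lambda$" algorithm: $\alpha_0=\alpha$, and for $j\ge 0$, $r_j=\lfloor \alpha_j/\lambda\rfloor+1$ and $\alpha_{j+1}=\frac{1}{r_j\lambda-\alpha_j}$; the sequence $[r_0;r_1,\dots]$ is the $\lambda$-continued fraction of $\alpha$, where $[r_0;r_1,\dots,r_n]=r_0\lambda-\cfrac{1}{r_1\lambda-\cfrac{1}{\ddots-\cfrac{1}{r_n\lambda}}}$. A $\lambda$-continued fraction is admissible if it arises from some finite real number by this algorithm. *)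

theory Defs
  imports Complex_Main
begin

definition lambda_p :: "nat \<Rightarrow> real" where
  "lambda_p p = 2 * cos (pi / real p)"

fun lcf_alpha :: "real \<Rightarrow> real \<Rightarrow> nat \<Rightarrow> real" where
  "lcf_alpha l a 0 = a"
| "lcf_alpha l a (Suc n) =
     1 / (real_of_int (\<lfloor>lcf_alpha l a n / l\<rfloor> + 1) * l - lcf_alpha l a n)"

definition lcf_digit :: "real \<Rightarrow> real \<Rightarrow> nat \<Rightarrow> int" where
  "lcf_digit l a n = \<lfloor>lcf_alpha l a n / l\<rfloor> + 1"

definition lcf_admissible :: "real \<Rightarrow> (nat \<Rightarrow> int) \<Rightarrow> bool" where
  "lcf_admissible l r \<longleftrightarrow> (\<exists>a::real. \<forall>n. r n = lcf_digit l a n)"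

end

theory Submission
  imports Defs
begin

text \<open>With \<open>\<theta> = \<pi>/p\<close>, the numbers \<open>x k = sin (k\<theta>) / sin ((k+1)\<theta>)\<close> satisfy
  \<open>x 0 = 0\<close>, \<open>x 1 = 1/\<lambda>\<close>, \<open>x (p-2) = \<lambda>\<close> and \<open>x (k+1) = 1/(\<lambda> - x k)\<close>: they form the orbit
  of \<open>0\<close> under the map \<open>t \<mapsto> 1/(\<lambda> - t)\<close> that the algorithm applies at every digit \<open>1\<close>.
  This map is increasing on \<open>t < \<lambda>\<close>, so if \<open>\<alpha>\<^sub>n \<ge> x k\<close> and the digits from \<open>r\<^sub>n\<close> on are \<open>1\<close>,
  then \<open>\<alpha>\<^sub>n\<^sub>+\<^sub>i \<ge> x (k+i)\<close>; at \<open>k + i = p - 2\<close> this gives \<open>\<alpha>\<^sub>n\<^sub>+\<^sub>i \<ge> \<lambda>\<close>, which forbids a further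
  digit \<open>1\<close>. Every \<open>\<alpha>\<^sub>m\<close> with \<open>m \<ge> 1\<close> is at least \<open>1/\<lambda> = x 1\<close>, and \<open>r\<^sub>0 = 1\<close> forces
  \<open>\<alpha>\<^sub>0 \<ge> 0 = x 0\<close>.\<close>

lemma lambda_p_pos:
  assumes "p \<ge> 3"
  shows "lambda_p p > 0"
proof -
  have "pi / real p \<le> pi / 3"
    using assms by (intro divide_left_mono) auto
  also have "\<dots> < pi / 2" by simp
  finally have "cos (pi / real p) > 0"
    by (intro cos_gt_zero_pi) (auto intro: less_le_trans[of _ 0] simp: pi_ge_zero)
  then show ?thesis by (simp add: lambda_p_def)
qed

lemma lcf_digit_eq_1_iff:
  assumes "l > 0"
  shows "lcf_digit l a n = 1 \<longleftrightarrow> 0 \<le> lcf_alpha l a n \<and> lcf_alpha l a n < l"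
  using assms by (simp add: lcf_digit_def floor_eq_iff zero_le_divide_iff divide_less_eq)

lemma lcf_alpha_Suc_ge:
  assumes "l > 0"
  shows "1 / l \<le> lcf_alpha l a (Suc n)"
proof -
  define b where "b = lcf_alpha l a n"
  define d where "d = (real_of_int \<lfloor>b / l\<rfloor> + 1) * l - b"
  have "real_of_int \<lfloor>b / l\<rfloor> * l \<le> b" "b < (real_of_int \<lfloor>b / l\<rfloor> + 1) * l"
    using assms by (simp_all add: pos_le_divide_eq[symmetric] pos_divide_less_eq[symmetric])
  then have "0 < d" "d \<le> l"
    by (auto simp: d_def algebra_simps)
  then have "1 / l \<le> 1 / d"
    by (intro divide_left_mono) auto
  then show ?thesis by (simp add: b_def d_def)
qed

lemma lcf_alpha_Suc_ge_if_digit_1: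
  assumes "l > 0" "lcf_digit l a n = 1" "x \<le> lcf_alpha l a n"
  shows "1 / (l - x) \<le> lcf_alpha l a (Suc n)"
proof -
  have "lcf_alpha l a n < l"
    using assms(1,2) lcf_digit_eq_1_iff by blast
  with assms(3) have "1 / (l - x) \<le> 1 / (l - lcf_alpha l a n)"
    by (intro divide_left_mono) auto
  also have "\<dots> = lcf_alpha l a (Suc n)"
    using assms(2) by (simp add: lcf_digit_def)
  finally show ?thesis .
qed

definition sin_ratio :: "real \<Rightarrow> nat \<Rightarrow> real" where
  "sin_ratio \<theta> k = sin (real k * \<theta>) / sin (real (Suc k) * \<theta>)"

lemma sin_ratio_0 [simp]: "sin_ratio \<theta> 0 = 0"
  by (simp add: sin_ratio_def)

text \<open>No condition on \<open>sin ((k+2)\<theta>)\<close> is needed: if it vanishes, both sides are \<open>0\<close>.\<close>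
lemma sin_ratio_Suc:
  assumes "sin (real (Suc k) * \<theta>) \<noteq> 0"
  shows "sin_ratio \<theta> (Suc k) = 1 / (2 * cos \<theta> - sin_ratio \<theta> k)"
proof -
  define s where "s = real (Suc k) * \<theta>"
  have "sin (real (Suc (Suc k)) * \<theta>) = sin (s + \<theta>)" "sin (real k * \<theta>) = sin (s - \<theta>)"
    by (simp_all add: s_def algebra_simps)
  then have "sin (real (Suc (Suc k)) * \<theta>) + sin (real k * \<theta>) = 2 * cos \<theta> * sin s"
    by (simp add: sin_add sin_diff)
  with assms have "2 * cos \<theta> - sin_ratio \<theta> k = sin (real (Suc (Suc k)) * \<theta>) / sin s"
    by (simp add: sin_ratio_def s_def field_simps)
  then show ?thesis
    by (simp add: sin_ratio_def s_def)
qed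

lemma sin_pi_ratio_pos:
  assumes "0 < k" "k < p"
  shows "sin (real k * (pi / real p)) > 0"
  using assms by (intro sin_gt_zero) (auto simp: field_simps)

lemma sin_ratio_last:
  assumes "p \<ge> 2"
  shows "sin_ratio (pi / real p) (p - 2) = lambda_p p"
proof -
  define \<theta> where "\<theta> = pi / real p"
  have "real p * \<theta> = pi"
    using assms by (simp add: \<theta>_def)
  with assms have "real (p - 2) * \<theta> = pi - 2 * \<theta>" "real (Suc (p - 2)) * \<theta> = pi - \<theta>"
    by (simp_all add: of_nat_diff algebra_simps)
  moreover have "sin \<theta> > 0"
    using sin_pi_ratio_pos[of 1 p] assms by (simp add: \<theta>_def)
  ultimately show ?thesis
    by (simp add: sin_ratio_def lambda_p_def sin_double flip: \<theta>_def)
qed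

lemma lcf_alpha_ge_sin_ratio:
  assumes "p \<ge> 3"
    and "sin_ratio (pi / real p) k \<le> lcf_alpha (lambda_p p) a n"
    and "k + i \<le> p - 2"
    and "\<forall>i'<i. lcf_digit (lambda_p p) a (n + i') = 1"
  shows "sin_ratio (pi / real p) (k + i) \<le> lcf_alpha (lambda_p p) a (n + i)"
  using assms(3,4)
proof (induction i)
  case 0
  then show ?case using assms(2) by simp
next
  case (Suc i)
  have "sin (real (Suc (k + i)) * (pi / real p)) \<noteq> 0"
    using sin_pi_ratio_pos[of "Suc (k + i)" p] Suc.prems(1) by linarith
  then have "sin_ratio (pi / real p) (Suc (k + i))
      = 1 / (lambda_p p - sin_ratio (pi / real p) (k + i))"
    unfolding lambda_p_def by (rule sin_ratio_Suc)
  also have "\<dots> \<le> lcf_alpha (lambda_p p) a (Suc (n + i))"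
    using Suc by (intro lcf_alpha_Suc_ge_if_digit_1 lambda_p_pos assms(1)) auto
  finally show ?case by simp
qed

lemma lcf_run_of_ones_bound:
  assumes "p \<ge> 3"
    and "sin_ratio (pi / real p) k \<le> lcf_alpha (lambda_p p) a n"
    and "k \<le> p - 2"
    and ones: "\<forall>i<j. lcf_digit (lambda_p p) a (n + i) = 1"
  shows "j \<le> p - 2 - k"
proof (rule ccontr)
  assume "\<not> j \<le> p - 2 - k"
  then have "lcf_digit (lambda_p p) a (n + (p - 2 - k)) = 1"
    using ones by simp
  then have "lcf_alpha (lambda_p p) a (n + (p - 2 - k)) < lambda_p p"
    using lcf_digit_eq_1_iff lambda_p_pos assms(1) by blast
  moreover have "sin_ratio (pi / real p) (k + (p - 2 - k)) \<le> lcf_alpha (lambda_p p) a (n + (p - 2 - k))"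
    using \<open>\<not> j \<le> p - 2 - k\<close> assms by (intro lcf_alpha_ge_sin_ratio) auto
  ultimately show False
    using sin_ratio_last[of p] assms(1,3) by simp
qed

theorem lemma2p3:
  fixes p :: nat and r :: "nat \<Rightarrow> int"
  assumes "p \<ge> 3"
    and "lcf_admissible (lambda_p p) r"
  shows "(\<forall>m j. m \<ge> 1 \<longrightarrow> (\<forall>i<j. r (m + i) = 1) \<longrightarrow> j \<le> p - 3)
       \<and> (\<forall>j. (\<forall>i<j. r i = 1) \<longrightarrow> j \<le> p - 2)"
proof -
  let ?l = "lambda_p p" and ?x = "sin_ratio (pi / real p)"
  obtain a where r: "r = lcf_digit ?l a"
    using assms(2) by (auto simp: lcf_admissible_def)
  have "?l > 0" using lambda_p_pos assms(1) .
  have "j \<le> p - 3" if "m \<ge> 1" "\<forall>i<j. r (m + i) = 1" for m j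
  proof -
    obtain m' where "m = Suc m'" using \<open>m \<ge> 1\<close> by (cases m) auto
    moreover have "?x 1 = 1 / ?l"
      using sin_ratio_Suc[of 0] sin_pi_ratio_pos[of 1 p] assms(1) by (simp add: lambda_p_def)
    ultimately have "?x 1 \<le> lcf_alpha ?l a m"
      using lcf_alpha_Suc_ge \<open>?l > 0\<close> by simp
    then show ?thesis
      using lcf_run_of_ones_bound[of p 1 a m j] that(2) assms(1) r by simp
  qed
  moreover have "j \<le> p - 2" if ones: "\<forall>i<j. r i = 1" for j
  proof (cases "j = 0")
    case False
    then have "?x 0 \<le> lcf_alpha ?l a 0"
      using ones lcf_digit_eq_1_iff[OF \<open>?l > 0\<close>] r by auto
    then show ?thesis
      using lcf_run_of_ones_bound[of p 0 a 0 j] ones assms(1) r by simp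
  qed simp
  ultimately show ?thesis by blast
qed

end
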